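(* Let $I\subset S$ be a $k$-clean monomial ideal. Then its radical $\sqrt{I}$ is $k$-clean.
   Context: $S=K[x_1,\dots,x_n]$ is a polynomial ring over a field $K$. For a monomial $u=x_1^{a_1}\cdots x_n^{a_n}$, $\mathrm{supp}(u)=\{i: a_i>0\}$. For an ideal $I$, $\min(I)$ denotes the set of minimal prime ideals of $I$. A monomial $u\neq 1$ with $u\notin I$ is a cleaner monomial of the monomial ideal $I$ if $\min(I+Su)\subseteq \min(I)$. For an integer $k\ge 0$, the class of $k$-clean monomial ideals is defined recursively (as the smallest class closed under the following rule): a proper monomial ideal $I$ is $k$-clean if either $I$ is a prime ideal, or $I$ has no embedded prime ideals (i.e. $\mathrm{Ass}(S/I)=\min(I)$) and there exists a cleaner monomial $u$ of $I$ with $|\mathrm{supp}(u)|\le k+1$ such that both $I:u$ and $I+Su$ are $k$-clean. *)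

theory Defs
  imports Main "HOL-Library.Poly_Mapping"
begin

text \<open>The polynomial ring S = K[x_i : i in n] over a field K, with a finite index type n
  of variable indices, is the type mpoly below (finitely supported
  coefficient functions on exponent vectors, multiplication = convolution).\<close>

type_synonym ('n, 'k) mpoly = "('n \<Rightarrow>\<^sub>0 nat) \<Rightarrow>\<^sub>0 'k"

definition is_ideal :: "'a::comm_ring_1 set \<Rightarrow> bool" where
  "is_ideal I \<longleftrightarrow> 0 \<in> I \<and> (\<forall>a\<in>I. \<forall>b\<in>I. a + b \<in> I) \<and> (\<forall>r. \<forall>a\<in>I. r * a \<in> I)"

definition ideal_gen :: "'a::comm_ring_1 set \<Rightarrow> 'a set" where
  "ideal_gen G = \<Inter> {J. is_ideal J \<and> G \<subseteq> J}"

definition is_prime_ideal :: "'a::comm_ring_1 set \<Rightarrow> bool" where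
  "is_prime_ideal P \<longleftrightarrow> is_ideal P \<and> P \<noteq> UNIV \<and> (\<forall>a b. a * b \<in> P \<longrightarrow> a \<in> P \<or> b \<in> P)"

definition colon :: "'a::comm_ring_1 set \<Rightarrow> 'a \<Rightarrow> 'a set" where
  "colon I u = {f. f * u \<in> I}"

definition radical :: "'a::comm_ring_1 set \<Rightarrow> 'a set" where
  "radical I = {f. \<exists>m. f ^ m \<in> I}"

definition minprimes :: "'a::comm_ring_1 set \<Rightarrow> 'a set set" where
  "minprimes I = {P. is_prime_ideal P \<and> I \<subseteq> P \<and>
                     (\<forall>Q. is_prime_ideal Q \<and> I \<subseteq> Q \<and> Q \<subseteq> P \<longrightarrow> Q = P)}"

text \<open>Ass(S/I): prime ideals that are annihilators I : f of elements f + I of S/I.\<close>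
definition ass :: "'a::comm_ring_1 set \<Rightarrow> 'a set set" where
  "ass I = {P. is_prime_ideal P \<and> (\<exists>f. P = colon I f)}"

definition monom :: "('n \<Rightarrow>\<^sub>0 nat) \<Rightarrow> ('n, 'k::comm_ring_1) mpoly" where
  "monom a = Poly_Mapping.single a 1"

definition monomial_ideal :: "('n, 'k::comm_ring_1) mpoly set \<Rightarrow> bool" where
  "monomial_ideal I \<longleftrightarrow> is_ideal I \<and> (\<exists>A. I = ideal_gen (monom ` A))"

definition cleaner :: "('n, 'k::comm_ring_1) mpoly set \<Rightarrow> ('n \<Rightarrow>\<^sub>0 nat) \<Rightarrow> bool" where
  "cleaner I a \<longleftrightarrow> a \<noteq> 0 \<and> monom a \<notin> I \<and>
      minprimes (ideal_gen (I \<union> {monom a})) \<subseteq> minprimes I"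

text \<open>k-clean monomial ideals (smallest class closed under the two rules).
  The support of x^a is keys a.\<close>
inductive kclean :: "nat \<Rightarrow> ('n, 'k::field) mpoly set \<Rightarrow> bool" for k where
  prime: "monomial_ideal (I :: ('n, 'k) mpoly set) \<Longrightarrow> I \<noteq> UNIV \<Longrightarrow> is_prime_ideal I \<Longrightarrow> kclean k I"
| step: "monomial_ideal I \<Longrightarrow> I \<noteq> UNIV \<Longrightarrow> ass I = minprimes I \<Longrightarrow>
         cleaner I a \<Longrightarrow> card (Poly_Mapping.keys a) \<le> k + 1 \<Longrightarrow>
         kclean k (colon I (monom a)) \<Longrightarrow> kclean k (ideal_gen (I \<union> {monom a})) \<Longrightarrow>
         kclean k I"

end

theory Submission
  imports Defs
begin

text \<open>A monomial ideal \<open>I\<close> is determined by the up-closed set \<open>U\<close> of exponents of the monomials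
  it contains. Its minimal primes are the ideals \<open>(x\<^sub>i : i \<in> F)\<close> for the minimal sets \<open>F\<close> of
  variables meeting the support of every exponent in \<open>U\<close> (the minimal covers of \<open>U\<close>), and \<open>\<surd>I\<close> is the intersection of
  these primes, a squarefree monomial ideal. Colons of a squarefree ideal by squarefree
  monomials \<open>x\<^sub>B\<close> are again squarefree (drop the covers meeting \<open>B\<close>), and such ideals have no
  embedded primes.

  One shows by induction along the definition of k-cleanness that every proper colon
  \<open>\<surd>I : x\<^sub>B\<close> is k-clean. Let \<open>u\<close> be the cleaner monomial of \<open>I\<close>, with support \<open>C\<close>. If
  \<open>C \<subseteq> B\<close>, then \<open>\<surd>I : x\<^sub>B = \<surd>(I : u) : x\<^sub>B\<close>, because \<open>I\<close> has no embedded primes. If every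
  cover of \<open>\<surd>I : x\<^sub>B\<close> meets \<open>C\<close>, then \<open>\<surd>I : x\<^sub>B = \<surd>(I + Su) : x\<^sub>B\<close>. Otherwise \<open>x\<^bsub>C - B\<^esub>\<close> is a
  cleaner monomial of \<open>\<surd>I : x\<^sub>B\<close>, and its colon and sum ideals are of the two previous
  kinds.\<close>

abbreviation keys :: "('a \<Rightarrow>\<^sub>0 'b::zero) \<Rightarrow> 'a set" where
  "keys \<equiv> Poly_Mapping.keys"

abbreviation lookup :: "('a \<Rightarrow>\<^sub>0 'b::zero) \<Rightarrow> 'a \<Rightarrow> 'b" where
  "lookup \<equiv> poly_mapping.lookup"

section \<open>Ideals of commutative rings\<close>

lemma ideal_gen_least: "is_ideal J \<Longrightarrow> G \<subseteq> J \<Longrightarrow> ideal_gen G \<subseteq> J"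
  unfolding ideal_gen_def by blast

lemma ideal_gen_superset: "G \<subseteq> ideal_gen G"
  unfolding ideal_gen_def by blast

lemma is_ideal_ideal_gen: "is_ideal (ideal_gen G)"
  unfolding is_ideal_def ideal_gen_def by auto

lemma ideal_mult_left: "is_ideal I \<Longrightarrow> a \<in> I \<Longrightarrow> r * a \<in> I"
  unfolding is_ideal_def by blast

lemma ideal_mult_right: "is_ideal I \<Longrightarrow> a \<in> I \<Longrightarrow> a * r \<in> I"
  unfolding is_ideal_def by (metis mult.commute)

lemma ideal_sum: "is_ideal J \<Longrightarrow> (\<And>x. x \<in> A \<Longrightarrow> g x \<in> J) \<Longrightarrow> sum g A \<in> J"
  by (induction A rule: infinite_finite_induct) (auto simp: is_ideal_def)

lemma ideal_eq_UNIV_iff: "is_ideal I \<Longrightarrow> I = UNIV \<longleftrightarrow> 1 \<in> I"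
  using ideal_mult_left[of I 1] by auto

lemma is_ideal_radical:
  fixes I :: "'a::comm_ring_1 set"
  assumes I: "is_ideal I"
  shows "is_ideal (radical I)"
  unfolding is_ideal_def
proof (intro conjI ballI allI)
  show "0 \<in> radical I"
    using I unfolding radical_def is_ideal_def by (auto intro: exI[of _ 1])
next
  fix r a assume "a \<in> radical I"
  then obtain m where "a ^ m \<in> I" unfolding radical_def by blast
  then have "r ^ m * a ^ m \<in> I" by (rule ideal_mult_left[OF I])
  then show "r * a \<in> radical I" unfolding radical_def by (auto simp: power_mult_distrib)
next
  fix a b assume "a \<in> radical I" "b \<in> radical I"
  then obtain m n where mn: "a ^ m \<in> I" "b ^ n \<in> I" unfolding radical_def by blast
  have "(a + b) ^ (m + n) = (\<Sum>i\<le>m + n. of_nat ((m + n) choose i) * a ^ i * b ^ (m + n - i))"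
    by (rule binomial_ring)
  also have "\<dots> \<in> I"
  proof (rule ideal_sum[OF I])
    fix i assume "i \<in> {..m + n}"
    show "of_nat ((m + n) choose i) * a ^ i * b ^ (m + n - i) \<in> I"
    proof (cases "m \<le> i")
      case True
      then have "a ^ i = a ^ (i - m) * a ^ m" by (simp flip: power_add)
      then show ?thesis using ideal_mult_right[OF I mn(1)] ideal_mult_left[OF I]
        by (metis mult.assoc mult.commute)
    next
      case False
      then have "b ^ (m + n - i) = b ^ (m - i) * b ^ n" by (simp flip: power_add)
      then show ?thesis using ideal_mult_left[OF I mn(2)] by (metis mult.assoc)
    qed
  qed
  finally show "a + b \<in> radical I" unfolding radical_def by blast
qed

lemma one_in_radical_iff: "1 \<in> radical I \<longleftrightarrow> 1 \<in> I"
  unfolding radical_def by (auto intro: exI[of _ 1])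

lemma prime_ideal_power: "is_prime_ideal P \<Longrightarrow> f ^ m \<in> P \<Longrightarrow> f \<in> P"
proof (induction m)
  case 0
  then show ?case using ideal_eq_UNIV_iff unfolding is_prime_ideal_def by auto
qed (auto simp: is_prime_ideal_def)

lemma radical_prime_ideal: "is_prime_ideal P \<Longrightarrow> radical P = P"
  unfolding radical_def using prime_ideal_power by (fastforce intro: exI[of _ 1])

lemma colon_prime_ideal: "is_prime_ideal P \<Longrightarrow> x \<notin> P \<Longrightarrow> colon P x = P"
  unfolding colon_def is_prime_ideal_def using ideal_mult_right by blast

lemma colon_one [simp]: "colon I 1 = I"
  unfolding colon_def by simp

lemma colon_subset_ass:
  assumes "is_ideal I" "P \<in> ass I" "g \<notin> P"
  shows "colon I g \<subseteq> P"
proof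
  fix h assume "h \<in> colon I g"
  obtain f where P: "is_prime_ideal P" "P = colon I f" using assms(2) unfolding ass_def by blast
  have "h * g * f \<in> I" using \<open>h \<in> colon I g\<close> ideal_mult_right[OF assms(1)] unfolding colon_def by blast
  then have "h * g \<in> P" using P(2) unfolding colon_def by blast
  then show "h \<in> P" using P(1) assms(3) unfolding is_prime_ideal_def by blast
qed

lemma ass_subset_minprimes:
  assumes I: "is_ideal I" and semiprime: "\<And>f. f * f \<in> I \<Longrightarrow> f \<in> I"
  shows "ass I \<subseteq> minprimes I"
proof
  fix P assume "P \<in> ass I"
  then obtain f where P: "is_prime_ideal P" "P = colon I f" unfolding ass_def by blast
  have IP: "I \<subseteq> P" unfolding P(2) colon_def using ideal_mult_right[OF I] by blast
  have "f \<notin> P"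
  proof
    assume "f \<in> P"
    then have "f \<in> I" using P(2) semiprime unfolding colon_def by blast
    then have "P = UNIV" unfolding P(2) colon_def using ideal_mult_left[OF I] by blast
    then show False using P(1) unfolding is_prime_ideal_def by blast
  qed
  have "Q = P" if Q: "is_prime_ideal Q" "I \<subseteq> Q" "Q \<subseteq> P" for Q
  proof -
    have "P \<subseteq> Q" using Q \<open>f \<notin> P\<close> P unfolding colon_def is_prime_ideal_def by blast
    then show ?thesis using Q(3) by blast
  qed
  then show "P \<in> minprimes I" unfolding minprimes_def using P(1) IP by blast
qed

section \<open>Polynomial rings in finitely many variables are domains\<close>

lemma poly_mapping_sum_single: "p = (\<Sum>t\<in>keys p. Poly_Mapping.single t (lookup p t))"
  by (rule poly_mapping_eqI) (simp add: lookup_sum lookup_single when_def in_keys_iff)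

lemma lookup_mult_Sum_any:
  "lookup (p * q) t = (\<Sum>(x, y). lookup p x * lookup q y when t = x + y)"
  by (simp add: times_poly_mapping.rep_eq prod_fun_unfold_prod)

lemma mult_poly_mapping_expand:
  "p * q = (\<Sum>s\<in>keys p. \<Sum>t\<in>keys q. Poly_Mapping.single (s + t) (lookup p s * lookup q t))"
proof -
  have "p * q = (\<Sum>s\<in>keys p. Poly_Mapping.single s (lookup p s)) *
                (\<Sum>t\<in>keys q. Poly_Mapping.single t (lookup q t))"
    by (simp only: flip: poly_mapping_sum_single)
  then show ?thesis by (simp add: sum_product mult_single)
qed

definition rename_keys :: "('a \<Rightarrow> 'b) \<Rightarrow> ('a \<Rightarrow>\<^sub>0 'c::zero) \<Rightarrow> 'b \<Rightarrow>\<^sub>0 'c" where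
  "rename_keys \<iota> p = Abs_poly_mapping (\<lambda>s. if s \<in> range \<iota> then lookup p (inv \<iota> s) else 0)"

lemma lookup_rename_keys:
  "lookup (rename_keys \<iota> p) s = (if s \<in> range \<iota> then lookup p (inv \<iota> s) else 0)"
proof -
  have "{s. (if s \<in> range \<iota> then lookup p (inv \<iota> s) else 0) \<noteq> 0} \<subseteq> \<iota> ` keys p"
  proof
    fix s assume "s \<in> {s. (if s \<in> range \<iota> then lookup p (inv \<iota> s) else 0) \<noteq> 0}"
    then have "s \<in> range \<iota>" "inv \<iota> s \<in> keys p" by (auto simp: in_keys_iff split: if_splits)
    then show "s \<in> \<iota> ` keys p" by (metis f_inv_into_f imageI)
  qed
  then have "finite {s. (if s \<in> range \<iota> then lookup p (inv \<iota> s) else 0) \<noteq> 0}"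
    by (rule finite_subset) simp
  then show ?thesis unfolding rename_keys_def by simp
qed

lemma lookup_rename_keys_image: "inj \<iota> \<Longrightarrow> lookup (rename_keys \<iota> p) (\<iota> t) = lookup p t"
  by (simp add: lookup_rename_keys)

lemma rename_keys_add: "rename_keys \<iota> (p + q) = rename_keys \<iota> p + rename_keys \<iota> q"
  by (rule poly_mapping_eqI) (simp add: lookup_rename_keys lookup_add)

lemma rename_keys_zero [simp]: "rename_keys \<iota> 0 = 0"
  by (rule poly_mapping_eqI) (simp add: lookup_rename_keys)

lemma rename_keys_sum: "rename_keys \<iota> (sum g A) = (\<Sum>x\<in>A. rename_keys \<iota> (g x))"
  by (induction A rule: infinite_finite_induct) (simp_all add: rename_keys_add)

lemma rename_keys_single:
  "inj \<iota> \<Longrightarrow> rename_keys \<iota> (Poly_Mapping.single t c) = Poly_Mapping.single (\<iota> t) c"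
proof (rule poly_mapping_eqI)
  fix s
  assume "inj \<iota>"
  show "lookup (rename_keys \<iota> (Poly_Mapping.single t c)) s = lookup (Poly_Mapping.single (\<iota> t) c) s"
  proof (cases "s \<in> range \<iota>")
    case True
    then show ?thesis using \<open>inj \<iota>\<close> by (auto simp: lookup_rename_keys lookup_single when_def dest: injD)
  next
    case False
    then have "\<iota> t \<noteq> s" by blast
    then show ?thesis using False by (simp add: lookup_rename_keys lookup_single when_def)
  qed
qed

lemma inj_rename_keys: "inj \<iota> \<Longrightarrow> inj (rename_keys \<iota>)"
  by (metis injI lookup_rename_keys_image poly_mapping_eqI)

lemma rename_keys_mult:
  assumes "inj \<iota>" and add: "\<And>s t. \<iota> (s + t) = \<iota> s + \<iota> t"
  shows "rename_keys \<iota> (p * q) = rename_keys \<iota> p * (rename_keys \<iota> q :: _ \<Rightarrow>\<^sub>0 'c::semiring_0)"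
proof -
  have expand: "rename_keys \<iota> r = (\<Sum>s\<in>keys r. Poly_Mapping.single (\<iota> s) (lookup r s))" for r
    by (subst (1) poly_mapping_sum_single) (simp add: rename_keys_sum rename_keys_single assms(1))
  have "rename_keys \<iota> p * rename_keys \<iota> q =
    (\<Sum>s\<in>keys p. \<Sum>t\<in>keys q. Poly_Mapping.single (\<iota> s + \<iota> t) (lookup p s * lookup q t))"
    unfolding expand by (simp add: sum_product mult_single)
  also have "\<dots> = rename_keys \<iota> (p * q)"
    by (simp add: mult_poly_mapping_expand[of p q] rename_keys_sum rename_keys_single assms)
  finally show ?thesis by simp
qed

text \<open>The exponent monoid of finitely many variables embeds additively into that of
  variables indexed by \<open>nat\<close>, for which the library provides the integral domain instance.\<close>
lemma mpoly_mult_neq_zero: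
  fixes f g :: "('n::finite, 'k::field) mpoly"
  assumes "f \<noteq> 0" "g \<noteq> 0"
  shows "f * g \<noteq> 0"
proof -
  obtain \<iota> :: "'n \<Rightarrow> nat" where "inj \<iota>"
    using finite_imp_inj_to_nat_seg[of "UNIV :: 'n set"] by auto
  define \<phi> :: "('n \<Rightarrow>\<^sub>0 nat) \<Rightarrow> nat \<Rightarrow>\<^sub>0 nat" where "\<phi> = rename_keys \<iota>"
  have \<phi>: "inj \<phi>" "\<And>s t. \<phi> (s + t) = \<phi> s + \<phi> t"
    unfolding \<phi>_def using \<open>inj \<iota>\<close> by (simp_all add: inj_rename_keys rename_keys_add)
  have "rename_keys \<phi> f * rename_keys \<phi> g \<noteq> 0"
    using assms inj_rename_keys[OF \<phi>(1)] by (metis injD mult_eq_0_iff rename_keys_zero)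
  then show ?thesis by (metis rename_keys_mult[OF \<phi>] rename_keys_zero)
qed

section \<open>Monomial ideals and up-closed sets of exponents\<close>

definition up_closed :: "('n \<Rightarrow>\<^sub>0 nat) set \<Rightarrow> bool" where
  "up_closed U \<longleftrightarrow> (\<forall>t s. t \<in> U \<longrightarrow> t + s \<in> U)"

definition multiples :: "('n \<Rightarrow>\<^sub>0 nat) set \<Rightarrow> ('n \<Rightarrow>\<^sub>0 nat) set" where
  "multiples A = {t. \<exists>a\<in>A. \<exists>s. t = a + s}"

definition monideal :: "('n \<Rightarrow>\<^sub>0 nat) set \<Rightarrow> ('n, 'k::comm_ring_1) mpoly set" where
  "monideal U = {f. keys f \<subseteq> U}"

definition monom_exps :: "('n, 'k::comm_ring_1) mpoly set \<Rightarrow> ('n \<Rightarrow>\<^sub>0 nat) set" where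
  "monom_exps I = {t. monom t \<in> I}"

lemma up_closed_multiples: "up_closed (multiples A)"
  unfolding up_closed_def multiples_def by (fastforce simp: add.assoc)

lemma self_in_multiples: "a \<in> A \<Longrightarrow> a \<in> multiples A"
  unfolding multiples_def by (metis (mono_tags) add_0_right mem_Collect_eq)

lemma multiples_up_closed: "up_closed U \<Longrightarrow> multiples U = U"
  using self_in_multiples[of _ U] unfolding up_closed_def multiples_def by blast

lemma multiples_Un: "multiples (A \<union> B) = multiples A \<union> multiples B"
  unfolding multiples_def by auto

lemma keys_add_nat: "keys (s + t :: 'n \<Rightarrow>\<^sub>0 nat) = keys s \<union> keys t"
  by (auto simp: in_keys_iff lookup_add)

lemma keys_subset_multiple: "t \<in> multiples {a} \<Longrightarrow> keys a \<subseteq> keys t"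
  unfolding multiples_def by (auto simp: keys_add_nat)

lemma up_closed_Un: "up_closed U \<Longrightarrow> up_closed W \<Longrightarrow> up_closed (U \<union> W)"
  unfolding up_closed_def by blast

lemma up_closed_colon:
  assumes "up_closed U"
  shows "up_closed {t. t + a \<in> U}"
  unfolding up_closed_def
proof (intro allI impI)
  fix t s assume "t \<in> {t. t + a \<in> U}"
  then have "(t + a) + s \<in> U" using assms unfolding up_closed_def by blast
  then show "t + s \<in> {t. t + a \<in> U}" by (simp add: ac_simps)
qed

lemma keys_monom [simp]: "keys (monom a :: ('n, 'k::comm_ring_1) mpoly) = {a}"
  unfolding monom_def by simp

lemma monom_zero [simp]: "monom 0 = (1 :: ('n, 'k::comm_ring_1) mpoly)"
  unfolding monom_def by simp

lemma monom_add: "monom (a + b) = monom a * (monom b :: ('n, 'k::comm_ring_1) mpoly)"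
  unfolding monom_def by (simp add: mult_single)

lemma single_mult_monom:
  "Poly_Mapping.single s c * monom a = (Poly_Mapping.single (s + a) c :: ('n, 'k::comm_ring_1) mpoly)"
  unfolding monom_def by (simp add: mult_single)

lemma monom_in_monideal [simp]: "(monom a :: ('n, 'k::comm_ring_1) mpoly) \<in> monideal U \<longleftrightarrow> a \<in> U"
  unfolding monideal_def by simp

lemma monideal_subset_iff: "(monideal U :: ('n, 'k::comm_ring_1) mpoly set) \<subseteq> monideal V \<longleftrightarrow> U \<subseteq> V"
  using monom_in_monideal unfolding monideal_def by blast

lemma is_ideal_monideal:
  assumes "up_closed U"
  shows "is_ideal (monideal U :: ('n, 'k::comm_ring_1) mpoly set)"
proof -
  have "keys (r * f) \<subseteq> U" if f: "keys f \<subseteq> U" for r f :: "('n, 'k) mpoly"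
  proof
    fix x assume "x \<in> keys (r * f)"
    then obtain b c where "x = b + c" "c \<in> keys f" using keys_mult by blast
    then show "x \<in> U" using f assms unfolding up_closed_def by (metis add.commute subsetD)
  qed
  moreover have "keys (f + g) \<subseteq> U" if "keys f \<subseteq> U" "keys g \<subseteq> U" for f g :: "('n, 'k) mpoly"
    using that keys_add[of f g] by blast
  ultimately show ?thesis unfolding is_ideal_def monideal_def by simp
qed

lemma ideal_gen_monom: "(ideal_gen (monom ` A) :: ('n, 'k::comm_ring_1) mpoly set) = monideal (multiples A)"
proof
  show "ideal_gen (monom ` A) \<subseteq> (monideal (multiples A) :: ('n, 'k) mpoly set)"
    by (rule ideal_gen_least[OF is_ideal_monideal[OF up_closed_multiples]])
      (auto simp: self_in_multiples)
  show "monideal (multiples A) \<subseteq> (ideal_gen (monom ` A) :: ('n, 'k) mpoly set)"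
  proof
    fix f :: "('n, 'k) mpoly" assume f: "f \<in> monideal (multiples A)"
    have "Poly_Mapping.single t (lookup f t) \<in> ideal_gen (monom ` A)" if t: "t \<in> keys f" for t
    proof -
      obtain a s where "a \<in> A" "t = s + a"
        using f t unfolding monideal_def multiples_def by (auto simp: add.commute)
      then have eq: "Poly_Mapping.single t (lookup f t) = Poly_Mapping.single s (lookup f t) * monom a"
        by (simp add: single_mult_monom)
      have "monom a \<in> ideal_gen (monom ` A)" using \<open>a \<in> A\<close> ideal_gen_superset by blast
      then show ?thesis unfolding eq by (rule ideal_mult_left[OF is_ideal_ideal_gen])
    qed
    then show "f \<in> ideal_gen (monom ` A)"
      by (subst poly_mapping_sum_single) (rule ideal_sum[OF is_ideal_ideal_gen])
  qed
qed

lemma monom_exps_monideal [simp]: "monom_exps (monideal U :: ('n, 'k::comm_ring_1) mpoly set) = U"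
  unfolding monom_exps_def by simp

lemma monomial_ideal_monideal:
  "up_closed U \<Longrightarrow> monomial_ideal (monideal U :: ('n, 'k::comm_ring_1) mpoly set)"
  unfolding monomial_ideal_def
  by (metis ideal_gen_monom is_ideal_monideal multiples_up_closed)

lemma monomial_idealD:
  assumes "monomial_ideal (I :: ('n, 'k::comm_ring_1) mpoly set)"
  shows "up_closed (monom_exps I)" "I = monideal (monom_exps I)"
proof -
  obtain A where "I = ideal_gen (monom ` A)" using assms unfolding monomial_ideal_def by blast
  then have "I = monideal (multiples A)" by (simp add: ideal_gen_monom)
  then show "up_closed (monom_exps I)" "I = monideal (monom_exps I)"
    by (simp_all add: up_closed_multiples)
qed

lemma lookup_mult_monom: "lookup (f * monom a) (t + a) = lookup (f :: ('n, 'k::comm_ring_1) mpoly) t"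
proof -
  have "f * monom a = (\<Sum>s\<in>keys f. Poly_Mapping.single (s + a) (lookup f s))"
    by (subst (1) poly_mapping_sum_single) (simp add: sum_distrib_right single_mult_monom)
  then show ?thesis by (simp add: lookup_sum lookup_single when_def in_keys_iff)
qed

lemma colon_monideal:
  "colon (monideal U :: ('n, 'k::comm_ring_1) mpoly set) (monom a) = monideal {t. t + a \<in> U}"
proof (intro set_eqI iffI)
  fix f :: "('n, 'k) mpoly"
  assume "f \<in> colon (monideal U) (monom a)"
  then have "keys (f * monom a) \<subseteq> U" unfolding colon_def monideal_def by simp
  moreover have "t + a \<in> keys (f * monom a)" if "t \<in> keys f" for t
    using that by (simp add: lookup_mult_monom in_keys_iff)
  ultimately show "f \<in> monideal {t. t + a \<in> U}" unfolding monideal_def by auto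
next
  fix f :: "('n, 'k) mpoly"
  assume "f \<in> monideal {t. t + a \<in> U}"
  then show "f \<in> colon (monideal U) (monom a)"
    using keys_mult[of f "monom a"] unfolding colon_def monideal_def by auto
qed

lemma ideal_gen_insert_monideal:
  assumes "up_closed U"
  shows "ideal_gen (monideal U \<union> {monom a}) = (monideal (U \<union> multiples {a}) :: ('n, 'k::comm_ring_1) mpoly set)"
proof
  have "monideal U \<union> {monom a} \<subseteq> (monideal (U \<union> multiples {a}) :: ('n, 'k) mpoly set)"
    using monideal_subset_iff[of U "U \<union> multiples {a}"] by (auto simp: self_in_multiples)
  then show "ideal_gen (monideal U \<union> {monom a}) \<subseteq> (monideal (U \<union> multiples {a}) :: ('n, 'k) mpoly set)"
    by (rule ideal_gen_least[OF is_ideal_monideal[OF up_closed_Un[OF assms up_closed_multiples]]])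
  have "monom ` (U \<union> {a}) \<subseteq> ideal_gen (monideal U \<union> {monom a} :: ('n, 'k) mpoly set)"
    using ideal_gen_superset by fastforce
  then have "ideal_gen (monom ` (U \<union> {a})) \<subseteq> ideal_gen (monideal U \<union> {monom a} :: ('n, 'k) mpoly set)"
    by (rule ideal_gen_least[OF is_ideal_ideal_gen])
  moreover have "ideal_gen (monom ` (U \<union> {a})) = (monideal (U \<union> multiples {a}) :: ('n, 'k) mpoly set)"
    by (simp only: ideal_gen_monom multiples_Un multiples_up_closed[OF assms])
  ultimately show "(monideal (U \<union> multiples {a}) :: ('n, 'k) mpoly set) \<subseteq> ideal_gen (monideal U \<union> {monom a})"
    by simp
qed

section \<open>Prime ideals generated by variables\<close>

definition sqfree_exp :: "'n::finite set \<Rightarrow> 'n \<Rightarrow>\<^sub>0 nat" where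
  "sqfree_exp S = Abs_poly_mapping (\<lambda>i. if i \<in> S then 1 else 0)"

lemma lookup_sqfree_exp: "lookup (sqfree_exp S) i = (if i \<in> S then 1 else 0)"
  unfolding sqfree_exp_def by simp

lemma keys_sqfree_exp [simp]: "keys (sqfree_exp S) = S"
  by (auto simp: in_keys_iff lookup_sqfree_exp split: if_splits)

lemma sqfree_exp_empty [simp]: "sqfree_exp {} = 0"
  by (rule poly_mapping_eqI) (simp add: lookup_sqfree_exp)

lemma sqfree_exp_eq_0_iff: "sqfree_exp S = 0 \<longleftrightarrow> S = {}"
  by (metis keys_sqfree_exp keys_zero sqfree_exp_empty)

lemma sqfree_exp_add_diff: "S \<subseteq> keys t \<Longrightarrow> t = sqfree_exp S + (t - sqfree_exp S)"
  by (rule poly_mapping_eqI) (auto simp: lookup_add lookup_minus lookup_sqfree_exp in_keys_iff)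

lemma multiples_sqfree_exp: "multiples {sqfree_exp S} = {t :: 'n::finite \<Rightarrow>\<^sub>0 nat. S \<subseteq> keys t}"
proof (intro set_eqI iffI)
  fix t assume "t \<in> multiples {sqfree_exp S}"
  then show "t \<in> {t. S \<subseteq> keys t}" using keys_subset_multiple by fastforce
next
  fix t :: "'n \<Rightarrow>\<^sub>0 nat" assume "t \<in> {t. S \<subseteq> keys t}"
  then have "t = sqfree_exp S + (t - sqfree_exp S)" by (simp add: sqfree_exp_add_diff)
  then show "t \<in> multiples {sqfree_exp S}" unfolding multiples_def by blast
qed

definition var_ideal :: "'n set \<Rightarrow> ('n, 'k::comm_ring_1) mpoly set" where
  "var_ideal F = monideal {t. keys t \<inter> F \<noteq> {}}"

definition kill_vars :: "'n set \<Rightarrow> ('n, 'k::comm_ring_1) mpoly \<Rightarrow> ('n, 'k) mpoly" where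
  "kill_vars F f = Abs_poly_mapping (\<lambda>t. if keys t \<inter> F = {} then lookup f t else 0)"

lemma lookup_kill_vars: "lookup (kill_vars F f) t = (if keys t \<inter> F = {} then lookup f t else 0)"
proof -
  have "{t. (if keys t \<inter> F = {} then lookup f t else 0) \<noteq> 0} \<subseteq> keys f"
    by (auto simp: in_keys_iff split: if_splits)
  then show ?thesis unfolding kill_vars_def by (simp add: finite_subset)
qed

lemma kill_vars_mult: "kill_vars F (f * g) = kill_vars F f * kill_vars F g"
proof (rule poly_mapping_eqI)
  fix t
  have "(\<Sum>(x, y). lookup f x * lookup g y when t = x + y) =
        (\<Sum>(x, y). lookup (kill_vars F f) x * lookup (kill_vars F g) y when t = x + y)"
    if "keys t \<inter> F = {}"
    using that by (intro Sum_any.cong) (auto simp: when_def lookup_kill_vars keys_add_nat, blast+)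
  moreover have "(\<Sum>(x, y). lookup (kill_vars F f) x * lookup (kill_vars F g) y when t = x + y) = 0"
    if "keys t \<inter> F \<noteq> {}"
  proof -
    have "(\<lambda>(x, y). lookup (kill_vars F f) x * lookup (kill_vars F g) y when t = x + y) = (\<lambda>_. 0)"
      using that by (auto simp: fun_eq_iff when_def lookup_kill_vars keys_add_nat)
    then show ?thesis by simp
  qed
  ultimately show "lookup (kill_vars F (f * g)) t = lookup (kill_vars F f * kill_vars F g) t"
    by (simp add: lookup_kill_vars lookup_mult_Sum_any)
qed

lemma in_var_ideal_iff_kill_vars: "f \<in> var_ideal F \<longleftrightarrow> kill_vars F f = 0"
  unfolding var_ideal_def monideal_def poly_mapping_eq_iff
  by (auto simp: fun_eq_iff lookup_kill_vars in_keys_iff)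

lemma up_closed_hitting: "up_closed {t. \<forall>X\<in>A. keys t \<inter> X \<noteq> {}}"
  unfolding up_closed_def by (auto simp: keys_add_nat)

lemma prime_var_ideal: "is_prime_ideal (var_ideal F :: ('n::finite, 'k::field) mpoly set)"
  unfolding is_prime_ideal_def
proof (intro conjI allI impI)
  show "is_ideal (var_ideal F :: ('n, 'k) mpoly set)"
    unfolding var_ideal_def using is_ideal_monideal up_closed_hitting[of "{F}"] by simp
  have "(monom 0 :: ('n, 'k) mpoly) \<notin> var_ideal F" by (simp only: var_ideal_def monom_in_monideal) simp
  then show "(var_ideal F :: ('n, 'k) mpoly set) \<noteq> UNIV" by blast
  fix a b :: "('n, 'k) mpoly"
  assume "a * b \<in> var_ideal F"
  then have "kill_vars F a * kill_vars F b = 0" by (simp add: in_var_ideal_iff_kill_vars kill_vars_mult)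
  then show "a \<in> var_ideal F \<or> b \<in> var_ideal F"
    using mpoly_mult_neq_zero by (auto simp: in_var_ideal_iff_kill_vars)
qed

lemma var_ideal_eq_ideal_gen:
  "var_ideal F = (ideal_gen (monom ` (\<lambda>i. sqfree_exp {i}) ` F) :: ('n::finite, 'k::comm_ring_1) mpoly set)"
proof -
  have "multiples ((\<lambda>i. sqfree_exp {i}) ` F) = (\<Union>i\<in>F. multiples {sqfree_exp {i}})"
    unfolding multiples_def by blast
  also have "\<dots> = {t. keys t \<inter> F \<noteq> {}}" by (auto simp: multiples_sqfree_exp)
  finally show ?thesis unfolding var_ideal_def by (simp add: ideal_gen_monom)
qed

lemma var_ideal_subset_prime:
  assumes "is_prime_ideal (P :: ('n::finite, 'k::comm_ring_1) mpoly set)" "\<forall>i\<in>F. monom (sqfree_exp {i}) \<in> P"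
  shows "var_ideal F \<subseteq> P"
  unfolding var_ideal_eq_ideal_gen
proof (rule ideal_gen_least)
  show "is_ideal P" using assms(1) unfolding is_prime_ideal_def by blast
  show "monom ` (\<lambda>i. sqfree_exp {i}) ` F \<subseteq> P" using assms(2) by blast
qed

lemma prime_ideal_contains_var:
  assumes P: "is_prime_ideal (P :: ('n::finite, 'k::comm_ring_1) mpoly set)" and "monom t \<in> P"
  shows "\<exists>i\<in>keys t. monom (sqfree_exp {i}) \<in> P"
  using assms(2)
proof (induction "sum (lookup t) UNIV" arbitrary: t rule: less_induct)
  case less
  show ?case
  proof (cases "t = 0")
    case True
    then show ?thesis using less.prems P ideal_eq_UNIV_iff unfolding is_prime_ideal_def by auto
  next
    case False
    then obtain i where i: "i \<in> keys t" by fastforce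
    define t' where "t' = t - sqfree_exp {i}"
    have "monom (sqfree_exp {i}) * monom t' \<in> P"
      using less.prems sqfree_exp_add_diff[of "{i}" t] i by (simp add: t'_def flip: monom_add)
    then consider "monom (sqfree_exp {i}) \<in> P" | "monom t' \<in> P"
      using P unfolding is_prime_ideal_def by blast
    then show ?thesis
    proof cases
      case 2
      have "sum (lookup t') UNIV < sum (lookup t) UNIV"
        using i by (intro sum_strict_mono_ex1)
          (auto simp: t'_def lookup_minus lookup_sqfree_exp in_keys_iff)
      moreover have "keys t' \<subseteq> keys t" by (auto simp: t'_def in_keys_iff lookup_minus)
      ultimately show ?thesis using less.hyps 2 by blast
    qed (use i in blast)
  qed
qed

lemma var_ideal_subset_iff:
  "(var_ideal F :: ('n::finite, 'k::comm_ring_1) mpoly set) \<subseteq> var_ideal G \<longleftrightarrow> F \<subseteq> G"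
proof -
  have "{t :: 'n \<Rightarrow>\<^sub>0 nat. keys t \<inter> F \<noteq> {}} \<subseteq> {t. keys t \<inter> G \<noteq> {}} \<longleftrightarrow> F \<subseteq> G"
  proof
    assume FG: "{t :: 'n \<Rightarrow>\<^sub>0 nat. keys t \<inter> F \<noteq> {}} \<subseteq> {t. keys t \<inter> G \<noteq> {}}"
    show "F \<subseteq> G"
    proof
      fix i assume "i \<in> F"
      then have "sqfree_exp {i} \<in> {t. keys t \<inter> F \<noteq> {}}" by simp
      then have "sqfree_exp {i} \<in> {t. keys t \<inter> G \<noteq> {}}" by (rule subsetD[OF FG])
      then show "i \<in> G" by simp
    qed
  qed blast
  then show ?thesis unfolding var_ideal_def monideal_subset_iff .
qed

lemma var_ideal_inject:
  "(var_ideal F :: ('n::finite, 'k::comm_ring_1) mpoly set) = var_ideal G \<longleftrightarrow> F = G"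
  by (simp add: set_eq_subset var_ideal_subset_iff)

section \<open>Minimal primes of monomial ideals\<close>

definition covers :: "('n \<Rightarrow>\<^sub>0 nat) set \<Rightarrow> 'n set set" where
  "covers U = {F. \<forall>t\<in>U. keys t \<inter> F \<noteq> {}}"

definition minimal_sets :: "'a set set \<Rightarrow> 'a set set" where
  "minimal_sets A = {F\<in>A. \<forall>G\<in>A. G \<subseteq> F \<longrightarrow> G = F}"

lemma covers_antimono: "U \<subseteq> W \<Longrightarrow> covers W \<subseteq> covers U"
  unfolding covers_def by blast

lemma covers_superset: "X \<in> covers U \<Longrightarrow> X \<subseteq> Y \<Longrightarrow> Y \<in> covers U"
  unfolding covers_def by blast

definition meeting :: "'a set set \<Rightarrow> 'a set \<Rightarrow> 'a set set" where
  "meeting A C = {X\<in>A. X \<inter> C \<noteq> {}}"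

lemma covers_Un_multiples: "covers (U \<union> multiples {u}) = meeting (covers U) (keys u)"
proof -
  have "u \<in> multiples {u}" by (simp add: self_in_multiples)
  then show ?thesis unfolding covers_def meeting_def by (blast dest: keys_subset_multiple)
qed

lemma monideal_subset_var_ideal_iff:
  "(monideal U :: ('n, 'k::comm_ring_1) mpoly set) \<subseteq> var_ideal F \<longleftrightarrow> F \<in> covers U"
  unfolding var_ideal_def monideal_subset_iff covers_def by auto

lemma exists_minimal_subset:
  fixes F :: "'n::finite set"
  assumes "F \<in> A"
  shows "\<exists>G\<in>minimal_sets A. G \<subseteq> F"
  using assms
proof (induction "card F" arbitrary: F rule: less_induct)
  case less
  show ?case
  proof (cases "F \<in> minimal_sets A")
    case False
    then obtain G where "G \<in> A" "G \<subset> F" using less.prems unfolding minimal_sets_def by blast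
    moreover from this have "card G < card F" by (simp add: psubset_card_mono)
    ultimately show ?thesis using less.hyps by (meson order.trans psubset_imp_subset)
  qed blast
qed

lemma prime_ideal_contains_var_ideal:
  assumes "is_prime_ideal (P :: ('n::finite, 'k::comm_ring_1) mpoly set)" "monideal U \<subseteq> P"
  defines "F \<equiv> {i. monom (sqfree_exp {i}) \<in> P}"
  shows "F \<in> covers U" "var_ideal F \<subseteq> P"
proof -
  show "F \<in> covers U"
    unfolding covers_def
  proof (intro CollectI ballI)
    fix t assume "t \<in> U"
    then have "monom t \<in> P" by (intro subsetD[OF assms(2)]) simp
    then show "keys t \<inter> F \<noteq> {}" using prime_ideal_contains_var[OF assms(1)] unfolding F_def by blast
  qed
  show "var_ideal F \<subseteq> P" by (rule var_ideal_subset_prime[OF assms(1)]) (simp add: F_def)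
qed

lemma minprimes_monideal:
  assumes "up_closed U"
  shows "minprimes (monideal U :: ('n::finite, 'k::field) mpoly set) = var_ideal ` minimal_sets (covers U)"
proof (intro set_eqI iffI)
  fix P :: "('n, 'k) mpoly set" assume P: "P \<in> minprimes (monideal U)"
  then have prime: "is_prime_ideal P" "monideal U \<subseteq> P" unfolding minprimes_def by auto
  have min: "Q = P" if "is_prime_ideal Q" "monideal U \<subseteq> Q" "Q \<subseteq> P" for Q
    using P that unfolding minprimes_def by auto
  obtain F where F: "F \<in> covers U" "var_ideal F \<subseteq> P"
    using prime_ideal_contains_var_ideal[OF prime] by blast
  have eq: "var_ideal F = P"
    using F by (intro min prime_var_ideal) (simp_all add: monideal_subset_var_ideal_iff)
  have "G = F" if G: "G \<in> covers U" "G \<subseteq> F" for G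
  proof -
    have "var_ideal G \<subseteq> P" using G(2) eq var_ideal_subset_iff by blast
    then have "var_ideal G = P"
      using G(1) by (intro min prime_var_ideal) (simp_all add: monideal_subset_var_ideal_iff)
    then show ?thesis using eq var_ideal_inject by metis
  qed
  then have "F \<in> minimal_sets (covers U)" using F(1) unfolding minimal_sets_def by blast
  then show "P \<in> var_ideal ` minimal_sets (covers U)" using eq by blast
next
  fix P :: "('n, 'k) mpoly set" assume "P \<in> var_ideal ` minimal_sets (covers U)"
  then obtain F where F: "F \<in> minimal_sets (covers U)" "P = var_ideal F" by blast
  then have "monideal U \<subseteq> P" by (simp add: monideal_subset_var_ideal_iff minimal_sets_def)
  moreover have "Q = P" if Q: "is_prime_ideal Q" "monideal U \<subseteq> Q" "Q \<subseteq> P" for Q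
  proof -
    obtain G where G: "G \<in> covers U" "var_ideal G \<subseteq> Q"
      using prime_ideal_contains_var_ideal[OF Q(1,2)] by blast
    then have "G \<subseteq> F" using Q(3) F(2) var_ideal_subset_iff by blast
    then have "G = F" using F(1) G(1) unfolding minimal_sets_def by blast
    then show "Q = P" using G(2) Q(3) F(2) by blast
  qed
  ultimately show "P \<in> minprimes (monideal U)"
    unfolding minprimes_def using F(2) prime_var_ideal by blast
qed

section \<open>Squarefree monomial ideals\<close>

definition sqfree_ideal :: "'n set set \<Rightarrow> ('n, 'k::comm_ring_1) mpoly set" where
  "sqfree_ideal A = monideal {t. \<forall>X\<in>A. keys t \<inter> X \<noteq> {}}"

definition supersets :: "'a set set \<Rightarrow> 'a set set" where
  "supersets A = {Y. \<exists>X\<in>A. X \<subseteq> Y}"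

definition avoiding :: "'a set set \<Rightarrow> 'a set \<Rightarrow> 'a set set" where
  "avoiding A B = {X\<in>A. X \<inter> B = {}}"

lemma mem_sqfree_ideal_iff: "f \<in> sqfree_ideal A \<longleftrightarrow> (\<forall>X\<in>A. f \<in> var_ideal X)"
  unfolding sqfree_ideal_def var_ideal_def monideal_def by auto

lemma sqfree_ideal_singleton: "sqfree_ideal {X} = var_ideal X"
  unfolding sqfree_ideal_def var_ideal_def by simp

lemma is_ideal_sqfree_ideal: "is_ideal (sqfree_ideal A)"
  unfolding sqfree_ideal_def by (rule is_ideal_monideal[OF up_closed_hitting])

lemma monomial_ideal_sqfree_ideal: "monomial_ideal (sqfree_ideal A)"
  unfolding sqfree_ideal_def by (rule monomial_ideal_monideal[OF up_closed_hitting])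

lemma sqfree_ideal_eq_UNIV_iff: "(sqfree_ideal A :: ('n, 'k::comm_ring_1) mpoly set) = UNIV \<longleftrightarrow> A = {}"
proof
  assume "(sqfree_ideal A :: ('n, 'k) mpoly set) = UNIV"
  then have "(monom 0 :: ('n, 'k) mpoly) \<in> sqfree_ideal A" by simp
  then show "A = {}" unfolding sqfree_ideal_def by (simp del: monom_zero)
qed (simp add: sqfree_ideal_def monideal_def)

lemma sqfree_ideal_eqI:
  fixes F G :: "'n set set"
  assumes "F \<subseteq> G" and "\<And>Y. Y \<in> G \<Longrightarrow> \<exists>X\<in>F. X \<subseteq> Y"
  shows "sqfree_ideal F = sqfree_ideal G"
proof -
  have "(\<forall>X\<in>F. keys t \<inter> X \<noteq> {}) \<longleftrightarrow> (\<forall>Y\<in>G. keys t \<inter> Y \<noteq> {})" for t :: "'n \<Rightarrow>\<^sub>0 nat"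
  proof
    assume F: "\<forall>X\<in>F. keys t \<inter> X \<noteq> {}"
    show "\<forall>Y\<in>G. keys t \<inter> Y \<noteq> {}"
    proof
      fix Y assume "Y \<in> G"
      then obtain X where "X \<in> F" "X \<subseteq> Y" using assms(2) by blast
      then show "keys t \<inter> Y \<noteq> {}" using F by blast
    qed
  qed (use assms(1) in blast)
  then show ?thesis unfolding sqfree_ideal_def by simp
qed

lemma monom_power: "monom t ^ n = (monom (\<Sum>i<n. t) :: ('n, 'k::comm_ring_1) mpoly)"
  by (induction n) (simp_all add: monom_add mult.commute)

text \<open>\<open>x\<^sup>t\<close> raised to the total degree of \<open>x\<^sup>s\<close> is a multiple of \<open>x\<^sup>s\<close>.\<close>
lemma monom_in_radical_monideal:
  assumes U: "up_closed U" and s: "s \<in> U" "keys s \<subseteq> keys t"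
  shows "monom t \<in> radical (monideal U :: ('n::finite, 'k::comm_ring_1) mpoly set)"
proof -
  define N where "N = sum (lookup s) UNIV"
  have "lookup s i \<le> N * lookup t i" for i
  proof (cases "i \<in> keys s")
    case True
    then have "i \<in> keys t" using s(2) by blast
    then have "1 \<le> lookup t i" by (simp add: in_keys_iff)
    moreover have "lookup s i \<le> N" unfolding N_def by (rule member_le_sum) simp_all
    ultimately show ?thesis by (metis mult.right_neutral mult_le_mono order_trans)
  qed (simp add: in_keys_iff)
  then have "(\<Sum>i<N. t) = s + ((\<Sum>i<N. t) - s)"
    by (intro poly_mapping_eqI) (simp add: lookup_add lookup_minus lookup_sum)
  then have "(\<Sum>i<N. t) \<in> U" using U s(1) unfolding up_closed_def by metis
  then have "monom t ^ N \<in> (monideal U :: ('n, 'k) mpoly set)" by (simp add: monom_power)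
  then show ?thesis unfolding radical_def by blast
qed

lemma radical_monideal:
  assumes U: "up_closed U"
  shows "radical (monideal U :: ('n::finite, 'k::field) mpoly set) = sqfree_ideal (covers U)"
proof
  show "radical (monideal U :: ('n, 'k) mpoly set) \<subseteq> sqfree_ideal (covers U)"
  proof
    fix f :: "('n, 'k) mpoly" assume "f \<in> radical (monideal U)"
    then obtain m where m: "f ^ m \<in> monideal U" unfolding radical_def by blast
    have "f \<in> var_ideal X" if "X \<in> covers U" for X
      using m that monideal_subset_var_ideal_iff prime_ideal_power[OF prime_var_ideal] by blast
    then show "f \<in> sqfree_ideal (covers U)" by (simp add: mem_sqfree_ideal_iff)
  qed
  show "sqfree_ideal (covers U) \<subseteq> radical (monideal U :: ('n, 'k) mpoly set)"
  proof
    fix f :: "('n, 'k) mpoly" assume f: "f \<in> sqfree_ideal (covers U)"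
    have rad: "is_ideal (radical (monideal U :: ('n, 'k) mpoly set))"
      by (rule is_ideal_radical[OF is_ideal_monideal[OF U]])
    have "monom t \<in> radical (monideal U :: ('n, 'k) mpoly set)" if "t \<in> keys f" for t
    proof -
      have "\<exists>s\<in>U. keys s \<subseteq> keys t"
      proof (rule ccontr)
        assume "\<not> (\<exists>s\<in>U. keys s \<subseteq> keys t)"
        then have "- keys t \<in> covers U" unfolding covers_def by blast
        then show False using f that unfolding sqfree_ideal_def monideal_def by blast
      qed
      then show ?thesis using monom_in_radical_monideal[OF U] by blast
    qed
    then have "Poly_Mapping.single 0 (lookup f t) * monom t \<in> radical (monideal U)" if "t \<in> keys f" for t
      using that ideal_mult_left[OF rad] by blast
    then have "(\<Sum>t\<in>keys f. Poly_Mapping.single t (lookup f t)) \<in> radical (monideal U)"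
      by (intro ideal_sum[OF rad]) (simp add: single_mult_monom)
    then show "f \<in> radical (monideal U)" by (simp flip: poly_mapping_sum_single)
  qed
qed

lemma covers_hitting: "covers {t. \<forall>X\<in>A. keys t \<inter> X \<noteq> {}} = supersets (A :: 'n::finite set set)"
proof
  show "covers {t. \<forall>X\<in>A. keys t \<inter> X \<noteq> {}} \<subseteq> supersets A"
  proof
    fix G assume G: "G \<in> covers {t. \<forall>X\<in>A. keys t \<inter> X \<noteq> {}}"
    show "G \<in> supersets A"
    proof (rule ccontr)
      assume "G \<notin> supersets A"
      then have "sqfree_exp (- G) \<in> {t. \<forall>X\<in>A. keys t \<inter> X \<noteq> {}}" unfolding supersets_def by auto
      then have "keys (sqfree_exp (- G)) \<inter> G \<noteq> {}" using G unfolding covers_def by blast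
      then show False by simp
    qed
  qed
  show "supersets A \<subseteq> covers {t. \<forall>X\<in>A. keys t \<inter> X \<noteq> {}}"
    unfolding supersets_def covers_def by blast
qed

lemma colon_sqfree_ideal: "colon (sqfree_ideal A) (monom b) = sqfree_ideal (avoiding A (keys b))"
proof -
  have "{t. \<forall>X\<in>A. keys (t + b) \<inter> X \<noteq> {}} = {t. \<forall>X\<in>avoiding A (keys b). keys t \<inter> X \<noteq> {}}"
    unfolding avoiding_def by (auto simp: keys_add_nat)
  then show ?thesis unfolding sqfree_ideal_def by (simp add: colon_monideal)
qed

lemma monom_in_sqfree_ideal_iff: "monom b \<in> sqfree_ideal A \<longleftrightarrow> avoiding A (keys b) = {}"
  unfolding sqfree_ideal_def avoiding_def by auto

lemma minprimes_sqfree_ideal: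
  "minprimes (sqfree_ideal A :: ('n::finite, 'k::field) mpoly set) = var_ideal ` minimal_sets (supersets A)"
  unfolding sqfree_ideal_def by (simp add: minprimes_monideal[OF up_closed_hitting] covers_hitting)

lemma ass_sqfree_ideal:
  "ass (sqfree_ideal A :: ('n::finite, 'k::field) mpoly set) = minprimes (sqfree_ideal A)"
proof
  have "f \<in> sqfree_ideal A" if "f * f \<in> (sqfree_ideal A :: ('n, 'k) mpoly set)" for f
    using that prime_var_ideal unfolding mem_sqfree_ideal_iff is_prime_ideal_def by blast
  then show "ass (sqfree_ideal A :: ('n, 'k) mpoly set) \<subseteq> minprimes (sqfree_ideal A)"
    by (intro ass_subset_minprimes[OF is_ideal_sqfree_ideal])
  show "minprimes (sqfree_ideal A :: ('n, 'k) mpoly set) \<subseteq> ass (sqfree_ideal A)"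
  proof
    fix P assume "P \<in> minprimes (sqfree_ideal A :: ('n, 'k) mpoly set)"
    then obtain G where G: "G \<in> minimal_sets (supersets A)" "P = var_ideal G"
      by (auto simp: minprimes_sqfree_ideal)
    have "avoiding A (- G) = {G}"
    proof -
      have "X = G" if "X \<in> A" "X \<subseteq> G" for X
        using G(1) that unfolding minimal_sets_def supersets_def by blast
      moreover obtain X0 where "X0 \<in> A" "X0 \<subseteq> G"
        using G(1) unfolding minimal_sets_def supersets_def by blast
      ultimately show ?thesis unfolding avoiding_def by blast
    qed
    then have "P = colon (sqfree_ideal A) (monom (sqfree_exp (- G)))"
      by (simp add: colon_sqfree_ideal sqfree_ideal_singleton G(2))
    moreover have "is_prime_ideal P" using G(2) prime_var_ideal by simp
    ultimately show "P \<in> ass (sqfree_ideal A)" unfolding ass_def by blast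
  qed
qed

lemma ideal_gen_insert_sqfree_ideal:
  "ideal_gen (sqfree_ideal A \<union> {monom (sqfree_exp C)}) =
    (sqfree_ideal (meeting (supersets A) C) :: ('n::finite, 'k::comm_ring_1) mpoly set)"
proof -
  have "{t :: 'n \<Rightarrow>\<^sub>0 nat. \<forall>X\<in>A. keys t \<inter> X \<noteq> {}} \<union> {t. C \<subseteq> keys t} =
        {t. \<forall>Y\<in>meeting (supersets A) C. keys t \<inter> Y \<noteq> {}}" (is "?L = ?R")
  proof
    show "?L \<subseteq> ?R" unfolding meeting_def supersets_def by blast
    show "?R \<subseteq> ?L"
    proof
      fix t assume t: "t \<in> ?R"
      show "t \<in> ?L"
      proof (rule ccontr)
        assume "t \<notin> ?L"
        then obtain X j where "X \<in> A" "keys t \<inter> X = {}" "j \<in> C" "j \<notin> keys t" by blast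
        then have "insert j X \<in> meeting (supersets A) C" "keys t \<inter> insert j X = {}"
          unfolding meeting_def supersets_def by blast+
        then show False using t by blast
      qed
    qed
  qed
  then show ?thesis
    unfolding sqfree_ideal_def ideal_gen_insert_monideal[OF up_closed_hitting] multiples_sqfree_exp
    by simp
qed

section \<open>Radicals of k-clean ideals\<close>

lemma supersets_meeting_supersets: "supersets (meeting (supersets A) C) = meeting (supersets A) C"
  unfolding supersets_def meeting_def by blast

text \<open>If a minimal member \<open>G\<close> of the left-hand family contained some \<open>X \<in> A\<close> disjoint
  from \<open>B \<union> C\<close>, then \<open>G = insert i X\<close> would be minimal among the members of \<open>A\<close> meeting \<open>C\<close>,
  hence minimal in \<open>A\<close>, contradicting \<open>X \<subset> G\<close>.\<close>
lemma minimal_sets_meeting_supersets_avoiding: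
  assumes up: "\<And>X Y. X \<in> A \<Longrightarrow> X \<subseteq> Y \<Longrightarrow> Y \<in> A"
    and min: "minimal_sets (meeting A C) \<subseteq> minimal_sets A"
  shows "minimal_sets (meeting (supersets (avoiding A B)) (C - B)) \<subseteq> minimal_sets (supersets (avoiding A B))"
proof
  let ?M = "meeting (supersets (avoiding A B)) (C - B)"
  fix G assume G: "G \<in> minimal_sets ?M"
  then have GM: "G \<in> ?M" and Gmin: "\<And>Z. Z \<in> ?M \<Longrightarrow> Z \<subseteq> G \<Longrightarrow> Z = G"
    unfolding minimal_sets_def by blast+
  have key: "X = G" if X: "X \<in> avoiding A B" "X \<subseteq> G" for X
  proof (cases "X \<inter> (C - B) = {}")
    case False
    then have "X \<in> ?M" using X unfolding meeting_def supersets_def by blast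
    then show ?thesis using Gmin X(2) by blast
  next
    case True
    obtain i where i: "i \<in> G" "i \<in> C" "i \<notin> B" using GM unfolding meeting_def by blast
    have "insert i X \<in> ?M" using X i unfolding meeting_def supersets_def by blast
    then have GX: "G = insert i X" using Gmin X i by blast
    have XA: "X \<in> A" "X \<inter> B = {}" "X \<inter> C = {}" using X True unfolding avoiding_def by auto
    have "G \<in> minimal_sets (meeting A C)"
      unfolding minimal_sets_def
    proof (intro CollectI conjI ballI impI)
      show "G \<in> meeting A C" using up[OF XA(1)] GX i unfolding meeting_def by blast
      fix Z assume Z: "Z \<in> meeting A C" "Z \<subseteq> G"
      then have "Z \<in> avoiding A B" "i \<in> Z"
        using GX XA i unfolding meeting_def avoiding_def by blast+
      then have "Z \<in> ?M" using i unfolding meeting_def supersets_def by blast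
      then show "Z = G" using Gmin Z(2) by blast
    qed
    then have "X = G" using min XA(1) X(2) unfolding minimal_sets_def by blast
    then show ?thesis using i True by blast
  qed
  show "G \<in> minimal_sets (supersets (avoiding A B))"
    unfolding minimal_sets_def
  proof (intro CollectI conjI ballI impI)
    show "G \<in> supersets (avoiding A B)" using GM unfolding meeting_def by blast
    fix Y assume "Y \<in> supersets (avoiding A B)" "Y \<subseteq> G"
    then show "Y = G" using key unfolding supersets_def by blast
  qed
qed

lemma sqfree_ideal_meeting_supersets_avoiding:
  assumes up: "\<And>X Y. X \<in> A \<Longrightarrow> X \<subseteq> Y \<Longrightarrow> Y \<in> A"
  shows "sqfree_ideal (meeting (supersets (avoiding A B)) (C - B)) = sqfree_ideal (avoiding (meeting A C) B)"
proof (rule sym, rule sqfree_ideal_eqI)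
  show "avoiding (meeting A C) B \<subseteq> meeting (supersets (avoiding A B)) (C - B)"
    unfolding avoiding_def meeting_def supersets_def by blast
  fix Y assume "Y \<in> meeting (supersets (avoiding A B)) (C - B)"
  then obtain X j where "X \<in> A" "X \<inter> B = {}" "X \<subseteq> Y" "j \<in> Y" "j \<in> C" "j \<notin> B"
    unfolding avoiding_def meeting_def supersets_def by blast
  moreover from this have "insert j X \<in> A" using up by blast
  ultimately show "\<exists>X\<in>avoiding (meeting A C) B. X \<subseteq> Y"
    unfolding avoiding_def meeting_def by (intro bexI[of _ "insert j X"]) auto
qed

lemma kclean_sqfree_ideal_step:
  fixes R :: "'n::finite set set"
  assumes "avoiding R C \<noteq> {}" "C \<noteq> {}" "card C \<le> k + 1"
    and "minimal_sets (meeting (supersets R) C) \<subseteq> minimal_sets (supersets R)"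
    and "kclean k (sqfree_ideal (avoiding R C) :: ('n, 'k::field) mpoly set)"
    and "kclean k (sqfree_ideal (meeting (supersets R) C) :: ('n, 'k) mpoly set)"
  shows "kclean k (sqfree_ideal R :: ('n, 'k) mpoly set)"
proof (rule kclean.step[where a = "sqfree_exp C"])
  show "monomial_ideal (sqfree_ideal R :: ('n, 'k) mpoly set)" by (rule monomial_ideal_sqfree_ideal)
  show "(sqfree_ideal R :: ('n, 'k) mpoly set) \<noteq> UNIV"
    using assms(1) by (auto simp: sqfree_ideal_eq_UNIV_iff avoiding_def)
  show "ass (sqfree_ideal R :: ('n, 'k) mpoly set) = minprimes (sqfree_ideal R)" by (rule ass_sqfree_ideal)
  show "cleaner (sqfree_ideal R :: ('n, 'k) mpoly set) (sqfree_exp C)"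
    unfolding cleaner_def ideal_gen_insert_sqfree_ideal minprimes_sqfree_ideal supersets_meeting_supersets
    using assms(1,2,4) by (auto simp: sqfree_exp_eq_0_iff monom_in_sqfree_ideal_iff)
  show "card (keys (sqfree_exp C)) \<le> k + 1" using assms(3) by simp
  show "kclean k (colon (sqfree_ideal R :: ('n, 'k) mpoly set) (monom (sqfree_exp C)))"
    using assms(5) by (simp add: colon_sqfree_ideal)
  show "kclean k (ideal_gen (sqfree_ideal R \<union> {monom (sqfree_exp C)}) :: ('n, 'k) mpoly set)"
    using assms(6) unfolding ideal_gen_insert_sqfree_ideal .
qed

text \<open>The induction invariant; \<open>B = {}\<close> recovers \<open>J\<close> itself.\<close>
definition kclean_sqfree_colons :: "nat \<Rightarrow> ('n::finite, 'k::field) mpoly set \<Rightarrow> bool" where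
  "kclean_sqfree_colons k J \<longleftrightarrow>
     (\<forall>B. monom (sqfree_exp B) \<notin> J \<longrightarrow> kclean k (colon J (monom (sqfree_exp B))))"

lemma kclean_sqfree_colons_sqfree_ideal:
  "kclean_sqfree_colons k (sqfree_ideal A :: ('n::finite, 'k::field) mpoly set) \<longleftrightarrow>
    (\<forall>B. avoiding A B \<noteq> {} \<longrightarrow> kclean k (sqfree_ideal (avoiding A B) :: ('n, 'k) mpoly set))"
  unfolding kclean_sqfree_colons_def by (simp add: colon_sqfree_ideal monom_in_sqfree_ideal_iff)

lemma kclean_sqfree_ideal_avoiding_via_cleaner:
  fixes A :: "'n::finite set set"
  assumes up: "\<And>X Y. X \<in> A \<Longrightarrow> X \<subseteq> Y \<Longrightarrow> Y \<in> A"
    and min: "minimal_sets (meeting A C) \<subseteq> minimal_sets A"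
    and card: "card C \<le> k + 1"
    and X0: "X0 \<in> avoiding A B" "X0 \<inter> C = {}" and "\<not> C \<subseteq> B"
    and colon_clean: "kclean k (sqfree_ideal (avoiding A (B \<union> C)) :: ('n, 'k::field) mpoly set)"
    and sum_clean: "\<And>D. avoiding (meeting A C) D \<noteq> {} \<Longrightarrow>
      kclean k (sqfree_ideal (avoiding (meeting A C) D) :: ('n, 'k) mpoly set)"
  shows "kclean k (sqfree_ideal (avoiding A B) :: ('n, 'k) mpoly set)"
proof (rule kclean_sqfree_ideal_step[where C = "C - B"])
  obtain i where i: "i \<in> C" "i \<notin> B" using \<open>\<not> C \<subseteq> B\<close> by blast
  have "avoiding (avoiding A B) (C - B) = avoiding A (B \<union> C)"
    unfolding avoiding_def by blast
  moreover have "X0 \<in> avoiding A (B \<union> C)" using X0 unfolding avoiding_def by blast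
  ultimately show "avoiding (avoiding A B) (C - B) \<noteq> {}"
    and "kclean k (sqfree_ideal (avoiding (avoiding A B) (C - B)) :: ('n, 'k) mpoly set)"
    using colon_clean by auto
  show "C - B \<noteq> {}" using i by blast
  show "card (C - B) \<le> k + 1" using card card_mono[of C "C - B"] by simp
  show "minimal_sets (meeting (supersets (avoiding A B)) (C - B)) \<subseteq> minimal_sets (supersets (avoiding A B))"
    by (rule minimal_sets_meeting_supersets_avoiding[OF up min])
  have "insert i X0 \<in> avoiding (meeting A C) B"
    using X0 i up unfolding avoiding_def meeting_def by blast
  then show "kclean k (sqfree_ideal (meeting (supersets (avoiding A B)) (C - B)) :: ('n, 'k) mpoly set)"
    using sum_clean by (auto simp: sqfree_ideal_meeting_supersets_avoiding[OF up])
qed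

text \<open>The combinatorial heart of the proof: \<open>A\<close> stands for the covers of the exponents
  of \<open>I\<close>, \<open>A'\<close> for those of \<open>I : u\<close> and \<open>meeting A C\<close> for those of \<open>I + Su\<close>, where \<open>C\<close> is
  the support of the cleaner monomial \<open>u\<close>.\<close>
lemma kclean_sqfree_colons_step:
  fixes A A' :: "'n::finite set set"
  assumes up: "\<And>X Y. X \<in> A \<Longrightarrow> X \<subseteq> Y \<Longrightarrow> Y \<in> A"
    and card: "card C \<le> k + 1"
    and agree: "\<And>D. C \<subseteq> D \<Longrightarrow>
      sqfree_ideal (avoiding A' D) = (sqfree_ideal (avoiding A D) :: ('n, 'k::field) mpoly set)"
    and min: "minimal_sets (meeting A C) \<subseteq> minimal_sets A"
    and colon_clean: "kclean_sqfree_colons k (sqfree_ideal A' :: ('n, 'k) mpoly set)"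
    and sum_clean: "kclean_sqfree_colons k (sqfree_ideal (meeting A C) :: ('n, 'k) mpoly set)"
  shows "kclean_sqfree_colons k (sqfree_ideal A :: ('n, 'k) mpoly set)"
  unfolding kclean_sqfree_colons_sqfree_ideal
proof (intro allI impI)
  fix B assume B: "avoiding A B \<noteq> {}"
  have big_colon: "kclean k (sqfree_ideal (avoiding A D) :: ('n, 'k) mpoly set)"
    if "C \<subseteq> D" "avoiding A D \<noteq> {}" for D
  proof -
    have "avoiding A' D \<noteq> {}"
      using agree[OF that(1)] that(2) sqfree_ideal_eq_UNIV_iff by metis
    then have "kclean k (sqfree_ideal (avoiding A' D) :: ('n, 'k) mpoly set)"
      using colon_clean by (simp add: kclean_sqfree_colons_sqfree_ideal)
    then show ?thesis using agree[OF that(1)] by simp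
  qed
  consider "C \<subseteq> B" | "avoiding A B = avoiding (meeting A C) B"
    | X0 where "X0 \<in> avoiding A B" "X0 \<inter> C = {}" "\<not> C \<subseteq> B"
    unfolding avoiding_def meeting_def by blast
  then show "kclean k (sqfree_ideal (avoiding A B) :: ('n, 'k) mpoly set)"
  proof cases
    case 1
    then show ?thesis using big_colon B by blast
  next
    case 2
    then show ?thesis using sum_clean B by (simp add: kclean_sqfree_colons_sqfree_ideal)
  next
    case 3
    show ?thesis
    proof (rule kclean_sqfree_ideal_avoiding_via_cleaner[OF up min card 3])
      have "avoiding A (B \<union> C) \<noteq> {}" using 3(1,2) unfolding avoiding_def by blast
      then show "kclean k (sqfree_ideal (avoiding A (B \<union> C)) :: ('n, 'k) mpoly set)"
        by (intro big_colon) blast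
      show "kclean k (sqfree_ideal (avoiding (meeting A C) D) :: ('n, 'k) mpoly set)"
        if "avoiding (meeting A C) D \<noteq> {}" for D
        using sum_clean that by (simp add: kclean_sqfree_colons_sqfree_ideal)
    qed
  qed
qed

text \<open>This is where the absence of embedded primes of \<open>I\<close> enters.\<close>
lemma sqfree_ideal_avoiding_covers_colon:
  assumes U: "up_closed U"
    and ass: "ass (monideal U :: ('n::finite, 'k::field) mpoly set) = minprimes (monideal U)"
    and "keys u \<subseteq> D"
  shows "sqfree_ideal (avoiding (covers {t. t + u \<in> U}) D) =
    (sqfree_ideal (avoiding (covers U) D) :: ('n, 'k) mpoly set)"
proof (rule sqfree_ideal_eqI)
  have "U \<subseteq> {t. t + u \<in> U}" using U unfolding up_closed_def by blast
  then show "avoiding (covers {t. t + u \<in> U}) D \<subseteq> avoiding (covers U) D"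
    using covers_antimono unfolding avoiding_def by blast
  fix Y assume Y: "Y \<in> avoiding (covers U) D"
  then obtain X where X: "X \<in> minimal_sets (covers U)" "X \<subseteq> Y"
    using exists_minimal_subset unfolding avoiding_def by blast
  have "(var_ideal X :: ('n, 'k) mpoly set) \<in> ass (monideal U)"
    using X(1) by (simp add: ass minprimes_monideal[OF U])
  moreover have "(monom u :: ('n, 'k) mpoly) \<notin> var_ideal X"
    using Y X(2) assms(3) unfolding avoiding_def var_ideal_def by auto
  ultimately have "colon (monideal U) (monom u) \<subseteq> (var_ideal X :: ('n, 'k) mpoly set)"
    by (rule colon_subset_ass[OF is_ideal_monideal[OF U]])
  then have "X \<in> covers {t. t + u \<in> U}"
    by (simp add: colon_monideal monideal_subset_var_ideal_iff)
  then show "\<exists>X\<in>avoiding (covers {t. t + u \<in> U}) D. X \<subseteq> Y"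
    using X(2) Y unfolding avoiding_def by blast
qed

lemma minimal_covers_meeting_if_cleaner:
  assumes U: "up_closed U" and "cleaner (monideal U :: ('n::finite, 'k::field) mpoly set) a"
  shows "minimal_sets (meeting (covers U) (keys a)) \<subseteq> minimal_sets (covers U)"
proof
  fix X assume "X \<in> minimal_sets (meeting (covers U) (keys a))"
  then have "(var_ideal X :: ('n, 'k) mpoly set) \<in> minprimes (ideal_gen (monideal U \<union> {monom a}))"
    unfolding ideal_gen_insert_monideal[OF U] minprimes_monideal[OF up_closed_Un[OF U up_closed_multiples]]
      covers_Un_multiples by simp
  then have "(var_ideal X :: ('n, 'k) mpoly set) \<in> var_ideal ` minimal_sets (covers U)"
    using assms(2) unfolding cleaner_def minprimes_monideal[OF U] by blast
  then show "X \<in> minimal_sets (covers U)" by (auto simp: var_ideal_inject)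
qed

lemma kclean_monomial_proper: "kclean k I \<Longrightarrow> monomial_ideal I \<and> I \<noteq> UNIV"
  by (induction rule: kclean.induct) auto

lemma kclean_radical_sqfree_colons:
  fixes I :: "('n::finite, 'k::field) mpoly set"
  assumes "kclean k I"
  shows "kclean_sqfree_colons k (radical I)"
  using assms
proof (induction rule: kclean.induct)
  case (prime I)
  then show ?case
    unfolding kclean_sqfree_colons_def by (simp add: radical_prime_ideal colon_prime_ideal kclean.prime)
next
  case (step I a)
  define U where "U = monom_exps I"
  have U: "up_closed U" and I: "I = monideal U" using monomial_idealD[OF step(1)] by (simp_all add: U_def)
  have colon: "colon I (monom a) = monideal {t. t + a \<in> U}" by (simp add: I colon_monideal)
  have sum: "ideal_gen (I \<union> {monom a}) = monideal (U \<union> multiples {a})"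
    unfolding I by (rule ideal_gen_insert_monideal[OF U])
  show ?case
    unfolding I radical_monideal[OF U]
  proof (rule kclean_sqfree_colons_step)
    show "card (keys a) \<le> k + 1" by (rule step(5))
    show "\<And>X Y. X \<in> covers U \<Longrightarrow> X \<subseteq> Y \<Longrightarrow> Y \<in> covers U" by (rule covers_superset)
    show "sqfree_ideal (avoiding (covers {t. t + a \<in> U}) D) = (sqfree_ideal (avoiding (covers U) D) :: ('n, 'k) mpoly set)"
      if "keys a \<subseteq> D" for D
      using sqfree_ideal_avoiding_covers_colon[OF U _ that] step(3) by (simp add: I)
    show "minimal_sets (meeting (covers U) (keys a)) \<subseteq> minimal_sets (covers U)"
      using minimal_covers_meeting_if_cleaner[OF U] step(4) by (simp add: I)
    show "kclean_sqfree_colons k (sqfree_ideal (covers {t. t + a \<in> U}) :: ('n, 'k) mpoly set)"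
      using step.IH(1) by (simp add: colon radical_monideal[OF up_closed_colon[OF U]])
    show "kclean_sqfree_colons k (sqfree_ideal (meeting (covers U) (keys a)) :: ('n, 'k) mpoly set)"
      using step.IH(2)
      unfolding sum radical_monideal[OF up_closed_Un[OF U up_closed_multiples]] covers_Un_multiples .
  qed
qed

theorem theorem3p2:
  fixes I :: "('n::finite, 'k::field) mpoly set" and k :: nat
  assumes "kclean k I"
  shows "kclean k (radical I)"
proof -
  have "monomial_ideal I" "I \<noteq> UNIV" using kclean_monomial_proper[OF assms] by auto
  then have "1 \<notin> radical I"
    by (simp add: one_in_radical_iff ideal_eq_UNIV_iff monomial_ideal_def)
  then show ?thesis
    using kclean_radical_sqfree_colons[OF assms] unfolding kclean_sqfree_colons_def
    by (metis colon_one monom_zero sqfree_exp_empty)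
qed

end
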